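(* Let $n\ge 1$ and let $G$ be a graph on the vertex set $[n]=\{1,\dots,n\}$. Assume there exists an involution $\tau$ of $[n]$ (a permutation with $\tau^2=\mathrm{id}$, possibly with fixed points) such that every $3$-element subset $S\subseteq[n]$ satisfies $$|E(G[S])|+|E(G[\tau(S)])|\ge 2 .$$ Then $|E(G)|\ge |E(T(n))|=\binom{\lfloor n/2\rfloor}{2}+\binom{\lceil n/2\rceil}{2}$.
   Context: $G[A]$ denotes the subgraph of $G$ induced on the vertex subset $A$, and $\tau(S)=\{\tau(s):s\in S\}$. $T(n)$ denotes the graph on $[n]$ that is the disjoint union of two cliques of sizes $\lfloor n/2\rfloor$ and $\lceil n/2\rceil$. *)

theory Defs
  imports Main
begin

definition simple_graph :: "'a set \<Rightarrow> 'a set set \<Rightarrow> bool" where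
  "simple_graph V E \<longleftrightarrow> (\<forall>e\<in>E. e \<subseteq> V \<and> card e = 2)"

definition induced_edges :: "'a set set \<Rightarrow> 'a set \<Rightarrow> 'a set set" where
  "induced_edges E A = {e \<in> E. e \<subseteq> A}"

end

theory Submission
  imports Defs
begin

text \<open>Give each pair \<open>e\<close> of vertices the weight \<open>[e \<in> E] + [\<tau>(e) \<in> E]\<close>. Summing over all pairs
counts every edge twice, and the hypothesis says exactly that every triangle has weight at
least 2. For any such weighting of the pairs of an \<open>m\<close>-set the total weight is at least twice
the number of edges of \<open>T(m)\<close>: if every pair has positive weight this is \<open>m choose 2\<close>, and
otherwise a pair \<open>{u, v}\<close> of weight 0 forces \<open>W {u,x} + W {v,x} \<ge> 2\<close> for all other \<open>x\<close>, so
removing \<open>u\<close> and \<open>v\<close> loses weight at least \<open>2(m - 2)\<close>, which is what the Turan count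
\<open>|E(T(m))| = |E(T(m - 2))| + (m - 2)\<close> requires.\<close>

definition two_subsets :: "'a set \<Rightarrow> 'a set set" where
  "two_subsets A = {e. e \<subseteq> A \<and> card e = 2}"

definition turan_edges :: "nat \<Rightarrow> nat" where
  "turan_edges m = (m div 2 choose 2) + ((m + 1) div 2 choose 2)"

definition heavy_triangles :: "'a set \<Rightarrow> ('a set \<Rightarrow> nat) \<Rightarrow> bool" where
  "heavy_triangles V W \<longleftrightarrow>
     (\<forall>x\<in>V. \<forall>y\<in>V. \<forall>z\<in>V. x \<noteq> y \<and> y \<noteq> z \<and> x \<noteq> z \<longrightarrow> 2 \<le> W {x,y} + W {y,z} + W {x,z})"

lemma choose_two_Suc: "Suc a choose 2 = a + (a choose 2)"
  by (simp add: numeral_2_eq_2)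

lemma turan_edges_add_two: "turan_edges (m + 2) = turan_edges m + m"
proof -
  have halves: "(m + 2) div 2 = Suc (m div 2)" "(m + 2 + 1) div 2 = Suc ((m + 1) div 2)"
    by simp_all
  have "m div 2 + (m + 1) div 2 = m" by presburger
  then show ?thesis unfolding turan_edges_def halves choose_two_Suc by simp
qed

lemma double_turan_edges_le: "2 * turan_edges m \<le> m choose 2"
proof (induction m rule: less_induct)
  case (less m)
  show ?case
  proof (cases "m < 2")
    case True
    then have "m = 0 \<or> m = 1" by auto
    then show ?thesis by (auto simp: turan_edges_def)
  next
    case False
    then obtain k where k: "m = k + 2" by (metis add.commute le_Suc_ex not_less)
    have "m choose 2 = (k choose 2) + 2 * k + 1"
      unfolding k using choose_two_Suc[of "Suc k"] choose_two_Suc[of k] by simp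
    with less[of k] show ?thesis unfolding k turan_edges_add_two by simp
  qed
qed

lemma finite_two_subsets: "finite A \<Longrightarrow> finite (two_subsets A)"
  unfolding two_subsets_def by (rule finite_subset[of _ "Pow A"]) auto

lemma card_two_subsets: "finite A \<Longrightarrow> card (two_subsets A) = card A choose 2"
  unfolding two_subsets_def by (rule n_subsets)

lemma bij_betw_image_two_subsets:
  assumes "bij_betw f A B"
  shows "bij_betw (image f) (two_subsets A) (two_subsets B)"
proof -
  have inj: "inj_on f A" using assms by (rule bij_betw_imp_inj_on)
  have card_image_sub: "card (f ` e) = card e" if "e \<subseteq> A" for e
    using inj that by (meson card_image inj_on_subset)
  have pow: "bij_betw (image f) (Pow A) (Pow B)" using assms by (rule bij_betw_Pow)
  show ?thesis
  proof (rule bij_betw_imageI)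
    show "inj_on (image f) (two_subsets A)"
      using bij_betw_imp_inj_on[OF pow] by (rule inj_on_subset) (auto simp: two_subsets_def)
    show "image f ` two_subsets A = two_subsets B"
    proof
      show "image f ` two_subsets A \<subseteq> two_subsets B"
        using bij_betw_imp_surj_on[OF pow] card_image_sub by (auto simp: two_subsets_def)
      show "two_subsets B \<subseteq> image f ` two_subsets A"
      proof
        fix e assume e: "e \<in> two_subsets B"
        then have "e \<in> image f ` Pow A"
          using bij_betw_imp_surj_on[OF pow] by (simp add: two_subsets_def)
        then obtain d where "d \<subseteq> A" "e = f ` d" by blast
        with e card_image_sub show "e \<in> image f ` two_subsets A" by (auto simp: two_subsets_def)
      qed
    qed
  qed
qed

text \<open>The pairs inside \<open>V - {u, v}\<close>, those through \<open>u\<close> and those through \<open>v\<close> are disjoint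
families of pairs inside \<open>V\<close>.\<close>

lemma sum_two_subsets_remove_pair:
  fixes W :: "'a set \<Rightarrow> nat"
  assumes "finite V" "u \<in> V" "v \<in> V" "u \<noteq> v"
  defines "U \<equiv> V - {u, v}"
  shows "sum W (two_subsets U) + (\<Sum>x\<in>U. W {u,x} + W {v,x}) \<le> sum W (two_subsets V)"
proof -
  define Pu where "Pu = (\<lambda>x. {u,x}) ` U"
  define Pv where "Pv = (\<lambda>x. {v,x}) ` U"
  have U: "finite U" "u \<notin> U" "v \<notin> U" "U \<subseteq> V" using assms by auto
  have "inj_on (\<lambda>x. {u,x}) U" "inj_on (\<lambda>x. {v,x}) U"
    using U by (auto intro!: inj_onI simp: doubleton_eq_iff)
  then have "sum W Pu = (\<Sum>x\<in>U. W {u,x})" "sum W Pv = (\<Sum>x\<in>U. W {v,x})"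
    unfolding Pu_def Pv_def by (simp_all add: sum.reindex)
  then have "sum W (two_subsets U) + (\<Sum>x\<in>U. W {u,x} + W {v,x})
      = sum W (two_subsets U) + sum W Pu + sum W Pv"
    by (simp add: sum.distrib)
  also have "\<dots> = sum W (two_subsets U \<union> Pu \<union> Pv)"
  proof -
    have "finite (two_subsets U)" "finite Pu" "finite Pv"
      using U by (simp_all add: finite_two_subsets Pu_def Pv_def)
    moreover have "two_subsets U \<inter> Pu = {}" "(two_subsets U \<union> Pu) \<inter> Pv = {}"
      using U assms(4) by (auto simp: two_subsets_def Pu_def Pv_def)
    ultimately show ?thesis by (simp add: sum.union_disjoint)
  qed
  also have "\<dots> \<le> sum W (two_subsets V)"
  proof (rule sum_mono2[OF finite_two_subsets[OF assms(1)]])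
    have "card {w, x} = 2" if "w \<in> {u, v}" "x \<in> U" for w x
      using that U by (cases "w = x") auto
    then show "two_subsets U \<union> Pu \<union> Pv \<subseteq> two_subsets V"
      using U assms(2-4) by (auto simp: two_subsets_def Pu_def Pv_def)
  qed simp
  finally show ?thesis .
qed

lemma weighted_turan:
  fixes W :: "'a set \<Rightarrow> nat"
  assumes "finite V" "heavy_triangles V W"
  shows "2 * turan_edges (card V) \<le> sum W (two_subsets V)"
  using assms
proof (induction "card V" arbitrary: V rule: less_induct)
  case less
  show ?case
  proof (cases "\<forall>e\<in>two_subsets V. 1 \<le> W e")
    case True
    have "2 * turan_edges (card V) \<le> card (two_subsets V)"
      using double_turan_edges_le card_two_subsets[OF less.prems(1)] by simp
    also have "\<dots> \<le> sum W (two_subsets V)"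
      using True sum_mono[of "two_subsets V" "\<lambda>_. 1" W] by simp
    finally show ?thesis .
  next
    case False
    then obtain u v where uv: "u \<in> V" "v \<in> V" "u \<noteq> v" "W {u,v} = 0"
      by (force simp: two_subsets_def card_2_iff)
    define U where "U = V - {u, v}"
    have card_V: "card V = card U + 2"
      using uv less.prems(1) card_Diff_subset[of "{u,v}" V] card_mono[of V "{u,v}"]
      by (simp add: U_def)
    have "heavy_triangles U W"
      using less.prems(2) by (auto simp: heavy_triangles_def U_def)
    then have IH: "2 * turan_edges (card U) \<le> sum W (two_subsets U)"
      using less.hyps[of U] less.prems(1) card_V by (simp add: U_def)
    have "2 \<le> W {u,x} + W {v,x}" if "x \<in> U" for x
      using that uv less.prems(2)[unfolded heavy_triangles_def, rule_format, of u v x]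
      by (auto simp: U_def insert_commute add.commute)
    then have "(\<Sum>x\<in>U. 2) \<le> (\<Sum>x\<in>U. W {u,x} + W {v,x})" by (rule sum_mono)
    with IH have "2 * turan_edges (card V) \<le> sum W (two_subsets U) + (\<Sum>x\<in>U. W {u,x} + W {v,x})"
      unfolding card_V turan_edges_add_two by simp
    also have "\<dots> \<le> sum W (two_subsets V)"
      unfolding U_def using less.prems(1) uv(1-3) by (rule sum_two_subsets_remove_pair)
    finally show ?thesis .
  qed
qed

lemma card_induced_edges_triangle:
  assumes "\<forall>e\<in>E. card e = 2" "a \<noteq> b" "b \<noteq> c" "a \<noteq> c"
  shows "card (induced_edges E {a,b,c})
    = of_bool ({a,b} \<in> E) + of_bool ({b,c} \<in> E) + of_bool ({a,c} \<in> E)"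
proof -
  have "induced_edges E {a,b,c} = {{a,b},{b,c},{a,c}} \<inter> {e. e \<in> E}"
    using assms(1) by (auto simp: induced_edges_def card_2_iff insert_commute)
  then have "card (induced_edges E {a,b,c}) = (\<Sum>e\<in>{{a,b},{b,c},{a,c}}. of_bool (e \<in> E))"
    by simp
  also have "\<dots> = of_bool ({a,b} \<in> E) + of_bool ({b,c} \<in> E) + of_bool ({a,c} \<in> E)"
    using assms(2-4) by (simp add: doubleton_eq_iff)
  finally show ?thesis .
qed

lemma sum_edge_weight_eq_double_card:
  assumes "finite V" "simple_graph V E" "bij_betw \<tau> V V"
  shows "(\<Sum>e\<in>two_subsets V. of_bool (e \<in> E) + of_bool (\<tau> ` e \<in> E)) = 2 * card E"
proof -
  have "E \<subseteq> two_subsets V" using assms(2) by (auto simp: simple_graph_def two_subsets_def)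
  then have "two_subsets V \<inter> {e. e \<in> E} = E" by blast
  then have count: "(\<Sum>e\<in>two_subsets V. of_bool (e \<in> E)) = card E"
    using finite_two_subsets[OF assms(1)] by simp
  have "(\<Sum>e\<in>two_subsets V. of_bool (\<tau> ` e \<in> E)) = (\<Sum>e\<in>two_subsets V. of_bool (e \<in> E) :: nat)"
    by (rule sum.reindex_bij_betw[OF bij_betw_image_two_subsets[OF assms(3)]])
  with count show ?thesis by (simp add: sum.distrib)
qed

lemma heavy_triangles_edge_weight:
  assumes "simple_graph V E" "inj_on \<tau> V"
    and "\<forall>S. S \<subseteq> V \<and> card S = 3 \<longrightarrow>
           2 \<le> card (induced_edges E S) + card (induced_edges E (\<tau> ` S))"
  shows "heavy_triangles V (\<lambda>e. of_bool (e \<in> E) + of_bool (\<tau> ` e \<in> E))"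
  unfolding heavy_triangles_def
proof (intro ballI impI)
  fix x y z assume xyz: "x \<in> V" "y \<in> V" "z \<in> V" "x \<noteq> y \<and> y \<noteq> z \<and> x \<noteq> z"
  then have "\<tau> x \<noteq> \<tau> y" "\<tau> y \<noteq> \<tau> z" "\<tau> x \<noteq> \<tau> z" using assms(2) by (auto dest: inj_onD)
  moreover have "\<forall>e\<in>E. card e = 2" using assms(1) by (simp add: simple_graph_def)
  moreover have "2 \<le> card (induced_edges E {x,y,z}) + card (induced_edges E (\<tau> ` {x,y,z}))"
    using assms(3)[rule_format, of "{x,y,z}"] xyz by simp
  ultimately show "(2::nat) \<le> of_bool ({x,y} \<in> E) + of_bool (\<tau> ` {x,y} \<in> E)
      + (of_bool ({y,z} \<in> E) + of_bool (\<tau> ` {y,z} \<in> E))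
      + (of_bool ({x,z} \<in> E) + of_bool (\<tau> ` {x,z} \<in> E))"
    using xyz by (simp add: card_induced_edges_triangle)
qed

theorem mainTheorem1:
  fixes n :: nat and E :: "nat set set" and \<tau> :: "nat \<Rightarrow> nat"
  assumes "n \<ge> 1"
    and "simple_graph {1..n} E"
    and "bij_betw \<tau> {1..n} {1..n}"
    and "\<forall>x\<in>{1..n}. \<tau> (\<tau> x) = x"
    and "\<forall>S. S \<subseteq> {1..n} \<and> card S = 3 \<longrightarrow>
           card (induced_edges E S) + card (induced_edges E (\<tau> ` S)) \<ge> 2"
  shows "card E \<ge> (n div 2 choose 2) + ((n + 1) div 2 choose 2)"
proof -
  define W :: "nat set \<Rightarrow> nat" where "W = (\<lambda>e. of_bool (e \<in> E) + of_bool (\<tau> ` e \<in> E))"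
  have "heavy_triangles {1..n} W"
    unfolding W_def using assms(2) bij_betw_imp_inj_on[OF assms(3)] assms(5)
    by (rule heavy_triangles_edge_weight)
  then have "2 * turan_edges n \<le> sum W (two_subsets {1..n})"
    using weighted_turan[of "{1..n}" W] by simp
  also have "\<dots> = 2 * card E"
    unfolding W_def using assms(2,3) by (simp add: sum_edge_weight_eq_double_card)
  finally show ?thesis by (simp add: turan_edges_def)
qed

end
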